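(* There is no finite saturated Nmatrix $\mathbb{M}$ such that $\vdash_{\mathbb{M}}=\vdash_{\diamond}$.
   Context: $\vdash_\diamond$ is the single-conclusion logic of the two-valued Nmatrix $\langle\{0,1\},\cdot,\{1\}\rangle$ with one binary connective $\diamond$ (platypus) interpreted by $\diamond(0,0)=\{0\}$, $\diamond(1,1)=\{1\}$, $\diamond(0,1)=\diamond(1,0)=\{0,1\}$. For an Nmatrix $\mathbb{M}=\langle V,\cdot_{\mathbb{M}},D\rangle$, $\rhd_{\mathbb{M}}$ is its multiple-conclusion logic ($\Gamma\rhd_{\mathbb{M}}\Delta$ iff every $\mathbb{M}$-valuation with $v(\Gamma)\subseteq D$ has $v(\Delta)\cap D\neq\emptyset$) and $\vdash_{\mathbb{M}}$ its single-conclusion fragment. $\mathbb{M}$ is saturated if for every $\vdash_{\mathbb{M}}$-theory $\Gamma$ there is an $\mathbb{M}$-valuation $v$ with $v(\psi)\in D$ iff $\psi\in\Gamma$; equivalently, if $\Gamma\not\vdash_{\mathbb{M}}\psi$ for every $\psi\in\Delta$ then $\Gamma\not\rhd_{\mathbb{M}}\Delta$. *)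

theory Defs
  imports Main
begin

datatype fm = Var nat | Dia fm fm

text \<open>An Nmatrix with value set UNIV of type 'v, multi-function interpretation dop of the
  connective, and designated set D. Nmatrix condition: every entry of the table is nonempty.\<close>
definition is_Nmatrix :: "('v \<Rightarrow> 'v \<Rightarrow> 'v set) \<Rightarrow> 'v set \<Rightarrow> bool" where
  "is_Nmatrix dop D \<longleftrightarrow> (\<forall>a b. dop a b \<noteq> {})"

definition valuation :: "('v \<Rightarrow> 'v \<Rightarrow> 'v set) \<Rightarrow> (fm \<Rightarrow> 'v) \<Rightarrow> bool" where
  "valuation dop v \<longleftrightarrow> (\<forall>A B. v (Dia A B) \<in> dop (v A) (v B))"

definition nm_cons :: "('v \<Rightarrow> 'v \<Rightarrow> 'v set) \<Rightarrow> 'v set \<Rightarrow> fm set \<Rightarrow> fm \<Rightarrow> bool" where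
  "nm_cons dop D \<Gamma> \<psi> \<longleftrightarrow> (\<forall>v. valuation dop v \<longrightarrow> v ` \<Gamma> \<subseteq> D \<longrightarrow> v \<psi> \<in> D)"

definition nm_theory :: "('v \<Rightarrow> 'v \<Rightarrow> 'v set) \<Rightarrow> 'v set \<Rightarrow> fm set \<Rightarrow> bool" where
  "nm_theory dop D \<Gamma> \<longleftrightarrow> (\<forall>\<psi>. nm_cons dop D \<Gamma> \<psi> \<longrightarrow> \<psi> \<in> \<Gamma>)"

definition saturated :: "('v \<Rightarrow> 'v \<Rightarrow> 'v set) \<Rightarrow> 'v set \<Rightarrow> bool" where
  "saturated dop D \<longleftrightarrow> (\<forall>\<Gamma>. nm_theory dop D \<Gamma> \<longrightarrow>
      (\<exists>v. valuation dop v \<and> (\<forall>\<psi>. v \<psi> \<in> D \<longleftrightarrow> \<psi> \<in> \<Gamma>)))"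

text \<open>The platypus Nmatrix on {0,1} (False = 0, True = 1), designated {1}.\<close>
definition platypus :: "bool \<Rightarrow> bool \<Rightarrow> bool set" where
  "platypus a b = (if a = b then {a} else {False, True})"

definition platypus_cons :: "fm set \<Rightarrow> fm \<Rightarrow> bool" where
  "platypus_cons = nm_cons platypus {True}"

end

theory Submission
  imports Defs
begin

text \<open>Suppose a saturated Nmatrix M with finitely many values had the platypus logic. The set of
  all p_i \<diamond> p_j with i \<noteq> j derives no variable in the platypus logic, so saturation yields an
  M-valuation that designates every p_i \<diamond> p_j but no variable. Having finitely many values, it
  gives two distinct variables p_i, p_j the same value. Since an Nmatrix only constrains a
  compound formula through the values of its components, p_i \<diamond> p_j may then be re-read as
  p_0 \<diamond> p_0, which yields an M-valuation refuting the platypus rule p_0 \<diamond> p_0 \<turnstile> p_0.\<close>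

lemma nm_theory_consequences: "nm_theory dop D {\<psi>. nm_cons dop D \<Gamma> \<psi>}"
  unfolding nm_theory_def nm_cons_def by blast

lemma nm_cons_of_member: "\<psi> \<in> \<Gamma> \<Longrightarrow> nm_cons dop D \<Gamma> \<psi>"
  unfolding nm_cons_def by blast

lemma finite_values_var_collision:
  fixes v :: "fm \<Rightarrow> 'v::finite"
  obtains i j where "i \<noteq> j" "v (Var i) = v (Var j)"
proof -
  have "\<not> inj (\<lambda>k. v (Var k))"
    using finite_imageD[of "\<lambda>k. v (Var k)" UNIV] by auto
  then show thesis
    using that unfolding inj_def by blast
qed

fun collapse :: "fm \<Rightarrow> fm \<Rightarrow> fm \<Rightarrow> fm" where
  "collapse A B (Var k) = A"
| "collapse A B (Dia C E) =
     (if C = Var 0 \<and> E = Var 0 then Dia A B else Dia (collapse A B C) (collapse A B E))"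

lemma valuation_collapse:
  assumes "valuation dop v" and "v A = v B"
  shows "valuation dop (v \<circ> collapse A B)"
  using assms unfolding valuation_def by (metis collapse.simps comp_apply)

lemma idem_rule_at_equal_values:
  assumes idem: "nm_cons dop D {Dia (Var 0) (Var 0)} (Var 0)"
    and v: "valuation dop v" and "v A = v B" and "v (Dia A B) \<in> D"
  shows "v A \<in> D"
proof -
  have "valuation dop (v \<circ> collapse A B)"
    using valuation_collapse[OF v \<open>v A = v B\<close>] .
  moreover have "(v \<circ> collapse A B) (Dia (Var 0) (Var 0)) \<in> D"
    using \<open>v (Dia A B) \<in> D\<close> by simp
  ultimately have "(v \<circ> collapse A B) (Var 0) \<in> D"
    using idem unfolding nm_cons_def by blast
  then show ?thesis by simp
qed

fun platypus_all_but :: "nat \<Rightarrow> fm \<Rightarrow> bool" where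
  "platypus_all_but k (Var m) = (m \<noteq> k)"
| "platypus_all_but k (Dia A B) = (platypus_all_but k A \<or> platypus_all_but k B)"

lemma valuation_platypus_all_but: "valuation platypus (platypus_all_but k)"
  unfolding valuation_def platypus_def by auto

lemma platypus_cons_idem: "platypus_cons {Dia (Var 0) (Var 0)} (Var 0)"
  unfolding platypus_cons_def nm_cons_def valuation_def platypus_def
  by (metis empty_iff image_subset_iff insert_iff)

definition distinct_var_pairs :: "fm set" where
  "distinct_var_pairs = {Dia (Var i) (Var j) | i j. i \<noteq> j}"

lemma platypus_distinct_var_pairs_not_cons_var:
  "\<not> platypus_cons distinct_var_pairs (Var k)"
proof -
  have "platypus_all_but k ` distinct_var_pairs \<subseteq> {True}"
    unfolding distinct_var_pairs_def by auto
  then show ?thesis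
    using valuation_platypus_all_but[of k] unfolding platypus_cons_def nm_cons_def
    by (metis platypus_all_but.simps(1) singletonD)
qed

theorem proposition5:
  fixes dop :: "'v::finite \<Rightarrow> 'v \<Rightarrow> 'v set" and D :: "'v set"
  assumes "is_Nmatrix dop D" and "saturated dop D"
  shows "nm_cons dop D \<noteq> platypus_cons"
proof
  assume same: "nm_cons dop D = platypus_cons"
  obtain v where v: "valuation dop v"
    and designated: "\<And>\<psi>. v \<psi> \<in> D \<longleftrightarrow> nm_cons dop D distinct_var_pairs \<psi>"
    using \<open>saturated dop D\<close> nm_theory_consequences unfolding saturated_def by blast
  obtain i j where "i \<noteq> j" and equal: "v (Var i) = v (Var j)"
    using finite_values_var_collision by blast
  then have "Dia (Var i) (Var j) \<in> distinct_var_pairs"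
    unfolding distinct_var_pairs_def by blast
  then have "v (Dia (Var i) (Var j)) \<in> D"
    using designated nm_cons_of_member by blast
  then have "v (Var i) \<in> D"
    using idem_rule_at_equal_values[OF _ v equal] platypus_cons_idem same by simp
  moreover have "v (Var i) \<notin> D"
    using designated platypus_distinct_var_pairs_not_cons_var same by simp
  ultimately show False by contradiction
qed

end
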